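(* Let $(X,\le)$ be a partially ordered set, $K_x=\{y\in X:y\le x\}$, and $\tau_\le$ the topology generated by the sets $K_x$ and $X\setminus K_x$, $x\in X$. If $(X,\tau_\le)$ is compact, then $(X,\tau_\le,\le)$ is a Noetherian Priestley space.
   Context: A Priestley space is a partially ordered set with a quasi-compact topology such that whenever $y\not\le x$ there is a clopen down-set containing $x$ but not $y$. It is Noetherian if every decreasing sequence of closed down-sets is eventually stationary (equivalently the topology of open up-sets is Noetherian). *)

theory Defs
  imports "HOL-Analysis.Analysis"
begin

definition poset_on :: "'a set \<Rightarrow> ('a \<Rightarrow> 'a \<Rightarrow> bool) \<Rightarrow> bool" where
  "poset_on X le \<longleftrightarrow>
     (\<forall>x\<in>X. le x x) \<and>
     (\<forall>x\<in>X. \<forall>y\<in>X. le x y \<and> le y x \<longrightarrow> x = y) \<and>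
     (\<forall>x\<in>X. \<forall>y\<in>X. \<forall>z\<in>X. le x y \<and> le y z \<longrightarrow> le x z)"

definition down_of :: "'a set \<Rightarrow> ('a \<Rightarrow> 'a \<Rightarrow> bool) \<Rightarrow> 'a \<Rightarrow> 'a set" where
  "down_of X le x = {y\<in>X. le y x}"

definition down_set :: "'a set \<Rightarrow> ('a \<Rightarrow> 'a \<Rightarrow> bool) \<Rightarrow> 'a set \<Rightarrow> bool" where
  "down_set X le A \<longleftrightarrow> A \<subseteq> X \<and> (\<forall>x\<in>A. \<forall>y\<in>X. le y x \<longrightarrow> y \<in> A)"

definition priestley_space :: "'a set \<Rightarrow> 'a topology \<Rightarrow> ('a \<Rightarrow> 'a \<Rightarrow> bool) \<Rightarrow> bool" where
  "priestley_space X T le \<longleftrightarrow>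
     poset_on X le \<and> topspace T = X \<and> compact_space T \<and>
     (\<forall>x\<in>X. \<forall>y\<in>X. \<not> le y x \<longrightarrow>
        (\<exists>U. openin T U \<and> closedin T U \<and> down_set X le U \<and> x \<in> U \<and> y \<notin> U))"

definition noetherian_priestley_space :: "'a set \<Rightarrow> 'a topology \<Rightarrow> ('a \<Rightarrow> 'a \<Rightarrow> bool) \<Rightarrow> bool" where
  "noetherian_priestley_space X T le \<longleftrightarrow>
     priestley_space X T le \<and>
     (\<forall>C :: nat \<Rightarrow> 'a set.
        (\<forall>n. closedin T (C n) \<and> down_set X le (C n)) \<and> (\<forall>n. C (Suc n) \<subseteq> C n) \<longrightarrow>
        (\<exists>N. \<forall>n\<ge>N. C n = C N))"

definition tau_le :: "'a set \<Rightarrow> ('a \<Rightarrow> 'a \<Rightarrow> bool) \<Rightarrow> 'a topology" where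
  "tau_le X le = topology_generated_by
     ((\<lambda>x. down_of X le x) ` X \<union> (\<lambda>x. X - down_of X le x) ` X)"

end

theory Submission
  imports Defs
begin

text \<open>Every principal down-set \<open>K\<^sub>x\<close> is clopen in \<open>\<tau>\<^sub>\<le>\<close>, which gives the Priestley separation
  at once. Moreover every down-set is the union of the open sets \<open>K\<^sub>x\<close> of its elements, hence open.
  So a decreasing sequence of closed down-sets has an open intersection, and by compactness
  the sequence must reach that intersection after finitely many steps.\<close>

lemma decseq_closedin_stationary_if_openin_Inter:
  fixes C :: "nat \<Rightarrow> 'a set"
  assumes "compact_space T" and closed: "\<And>n. closedin T (C n)" and "decseq C"
    and open_Inter: "openin T (\<Inter>n. C n)"
  shows "\<exists>N. \<forall>n\<ge>N. C n = C N"
proof -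
  define D where "D n = C n - (\<Inter>m. C m)" for n
  have "closedin T (D n)" for n
    unfolding D_def using closed open_Inter by (simp add: closedin_diff)
  moreover have "decseq D"
    using \<open>decseq C\<close> unfolding D_def decseq_def by blast
  moreover have "(\<Inter>n. D n) = {}"
    unfolding D_def by blast
  ultimately obtain N where "D N = {}"
    using compact_space_imp_nest[OF \<open>compact_space T\<close>, of D] by blast
  then have "C N \<subseteq> C n" for n
    unfolding D_def by blast
  moreover have "C n \<subseteq> C N" if "N \<le> n" for n
    using \<open>decseq C\<close> that unfolding decseq_def by blast
  ultimately show ?thesis
    by blast
qed

lemma down_of_subset: "down_of X le x \<subseteq> X"
  unfolding down_of_def by blast

lemma mem_down_of_self:
  "poset_on X le \<Longrightarrow> x \<in> X \<Longrightarrow> x \<in> down_of X le x"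
  unfolding poset_on_def down_of_def by blast

lemma down_set_down_of:
  "poset_on X le \<Longrightarrow> x \<in> X \<Longrightarrow> down_set X le (down_of X le x)"
  unfolding poset_on_def down_set_def down_of_def by blast

lemma down_set_INT:
  "(\<And>i. down_set X le (A i)) \<Longrightarrow> down_set X le (\<Inter>i. A i)"
  unfolding down_set_def by blast

lemma openin_down_set:
  assumes "poset_on X le" and "down_set X le A"
    and "\<And>x. x \<in> X \<Longrightarrow> openin T (down_of X le x)"
  shows "openin T A"
proof -
  have "A = (\<Union>x\<in>A. down_of X le x)"
  proof
    show "A \<subseteq> (\<Union>x\<in>A. down_of X le x)"
      using assms(2) mem_down_of_self[OF assms(1)] unfolding down_set_def by blast
    show "(\<Union>x\<in>A. down_of X le x) \<subseteq> A"
      using assms(2) unfolding down_set_def down_of_def by blast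
  qed
  moreover have "openin T (\<Union>x\<in>A. down_of X le x)"
    using assms(2,3) unfolding down_set_def by (intro openin_Union) blast
  ultimately show ?thesis
    by simp
qed

lemma topspace_tau_le: "topspace (tau_le X le) = X"
  unfolding tau_le_def down_of_def by auto

lemma openin_tau_le_down_of:
  "x \<in> X \<Longrightarrow> openin (tau_le X le) (down_of X le x)"
  unfolding tau_le_def by (rule topology_generated_by_Basis) blast

lemma closedin_tau_le_down_of:
  assumes "x \<in> X"
  shows "closedin (tau_le X le) (down_of X le x)"
proof -
  have "openin (tau_le X le) (X - down_of X le x)"
    unfolding tau_le_def using assms by (intro topology_generated_by_Basis) blast
  then show ?thesis
    by (simp add: closedin_def topspace_tau_le down_of_subset)
qed

lemma priestley_space_tau_le:
  assumes "poset_on X le" and "compact_space (tau_le X le)"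
  shows "priestley_space X (tau_le X le) le"
  unfolding priestley_space_def
proof (intro conjI ballI impI)
  fix x y assume "x \<in> X" and "\<not> le y x"
  then have "y \<notin> down_of X le x"
    unfolding down_of_def by blast
  with \<open>x \<in> X\<close> show "\<exists>U. openin (tau_le X le) U \<and> closedin (tau_le X le) U \<and>
      down_set X le U \<and> x \<in> U \<and> y \<notin> U"
    by (intro exI[of _ "down_of X le x"] conjI openin_tau_le_down_of closedin_tau_le_down_of
        down_set_down_of[OF assms(1)] mem_down_of_self[OF assms(1)])
qed (simp_all add: assms topspace_tau_le)

theorem proposition3p13:
  fixes X :: "'a set" and le :: "'a \<Rightarrow> 'a \<Rightarrow> bool"
  assumes "poset_on X le"
    and "compact_space (tau_le X le)"
  shows "noetherian_priestley_space X (tau_le X le) le"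
proof -
  have "\<exists>N. \<forall>n\<ge>N. C n = C N"
    if "\<forall>n. closedin (tau_le X le) (C n) \<and> down_set X le (C n)" and "\<forall>n. C (Suc n) \<subseteq> C n"
    for C :: "nat \<Rightarrow> 'a set"
  proof (rule decseq_closedin_stationary_if_openin_Inter)
    show "compact_space (tau_le X le)"
      by (fact assms(2))
    show "closedin (tau_le X le) (C n)" for n
      using that(1) by blast
    show "decseq C"
      using that(2) by (simp add: decseq_Suc_iff)
    have "down_set X le (\<Inter>n. C n)"
      using that(1) by (simp add: down_set_INT)
    then show "openin (tau_le X le) (\<Inter>n. C n)"
      by (rule openin_down_set[OF assms(1)]) (rule openin_tau_le_down_of)
  qed
  with priestley_space_tau_le[OF assms] show ?thesis
    unfolding noetherian_priestley_space_def by blast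
qed

end
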